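(* Let $n\in\mathbb{N}$ and let $G=(V,E)$ be a simple undirected graph with vertex set $V=[n]=\{1,\dots,n\}$. Then there exist a face $F$ of the linear ordering polytope $\mathrm{LOP}(2n)$ and an affine map $\alpha$ with $\alpha(F)=\mathrm{STAB}(G)$, i.e. the stable set polytope $\mathrm{STAB}(G)$ is an affine projection of a face of $\mathrm{LOP}(2n)$.
   Context: For $m\in\mathbb{N}$, a linear order on $[m]$ is a set $L$ of ordered pairs $(i,j)$, $i\neq j$, such that for each pair $i\neq j$ exactly one of $(i,j),(j,i)$ lies in $L$, and $L$ is transitive ($(i,j),(j,k)\in L\Rightarrow (i,k)\in L$). Its characteristic vector $\mathbf{y}\in\{0,1\}^{m(m-1)/2}$ has coordinates $y_{ij}$, $1\le i<j\le m$, with $y_{ij}=1$ if $(i,j)\in L$ and $y_{ij}=0$ if $(j,i)\in L$. The linear ordering polytope $\mathrm{LOP}(m)$ is the convex hull of all such characteristic vectors. The stable set polytope of a graph $G=([n],E)$ is $\mathrm{STAB}(G)=\mathrm{conv}\{\mathbf{x}\in\{0,1\}^n : x_i+x_j\le 1 \text{ for every edge } \{i,j\}\in E\}$. A hyperplane $H$ is supporting for a polytope $P$ if $P\cap H\neq\emptyset$ and $P$ lies entirely on one side of $H$; a face of $P$ is the intersection of $P$ with one or several supporting hyperplanes. A polytope $Q$ is an (affine) projection of a polytope $P$ if there is an affine map $\alpha$ with $\alpha(P)=Q$. *)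

theory Defs
  imports Complex_Main
begin

text \<open>Points of R^I are represented as real-valued functions on an index type that
  vanish outside the finite coordinate set I.\<close>

definition conv :: "('i \<Rightarrow> real) set \<Rightarrow> ('i \<Rightarrow> real) set" where
  "conv S = {x. \<exists>T c. finite T \<and> T \<noteq> {} \<and> T \<subseteq> S \<and> (\<forall>v\<in>T. c v \<ge> 0) \<and>
       (\<Sum>v\<in>T. c v) = 1 \<and> x = (\<lambda>k. \<Sum>v\<in>T. c v * v k)}"

definition lop_idx :: "nat \<Rightarrow> (nat \<times> nat) set" where
  "lop_idx m = {(i, j). 1 \<le> i \<and> i < j \<and> j \<le> m}"

definition is_linear_order :: "nat \<Rightarrow> (nat \<times> nat) set \<Rightarrow> bool" where
  "is_linear_order m L \<longleftrightarrow>
     L \<subseteq> {(i, j). i \<in> {1..m} \<and> j \<in> {1..m} \<and> i \<noteq> j} \<and>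
     (\<forall>i\<in>{1..m}. \<forall>j\<in>{1..m}. i \<noteq> j \<longrightarrow> ((i, j) \<in> L \<longleftrightarrow> (j, i) \<notin> L)) \<and>
     (\<forall>i j k. (i, j) \<in> L \<longrightarrow> (j, k) \<in> L \<longrightarrow> (i, k) \<in> L)"

definition char_vec :: "nat \<Rightarrow> (nat \<times> nat) set \<Rightarrow> (nat \<times> nat \<Rightarrow> real)" where
  "char_vec m L = (\<lambda>p. if p \<in> lop_idx m \<and> p \<in> L then 1 else 0)"

definition LOP :: "nat \<Rightarrow> (nat \<times> nat \<Rightarrow> real) set" where
  "LOP m = conv {char_vec m L | L. is_linear_order m L}"

definition simple_graph :: "nat \<Rightarrow> nat set set \<Rightarrow> bool" where
  "simple_graph n E \<longleftrightarrow> (\<forall>e\<in>E. e \<subseteq> {1..n} \<and> card e = 2)"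

definition STAB :: "nat \<Rightarrow> nat set set \<Rightarrow> (nat \<Rightarrow> real) set" where
  "STAB n E = conv {x. (\<forall>k\<in>{1..n}. x k \<in> {0, 1}) \<and> (\<forall>k. k \<notin> {1..n} \<longrightarrow> x k = 0) \<and>
                      (\<forall>i j. {i, j} \<in> E \<longrightarrow> x i + x j \<le> 1)}"

text \<open>Hyperplane {x. a\<cdot>x = b} in R^I (a = 0 allowed so that P itself counts as a face), and supporting hyperplanes.\<close>
definition ip :: "'i set \<Rightarrow> ('i \<Rightarrow> real) \<Rightarrow> ('i \<Rightarrow> real) \<Rightarrow> real" where
  "ip I a x = (\<Sum>k\<in>I. a k * x k)"

definition supporting :: "'i set \<Rightarrow> ('i \<Rightarrow> real) set \<Rightarrow> ('i \<Rightarrow> real) \<Rightarrow> real \<Rightarrow> bool" where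
  "supporting I P a b \<longleftrightarrow> (\<exists>x\<in>P. ip I a x = b) \<and>
     ((\<forall>x\<in>P. ip I a x \<le> b) \<or> (\<forall>x\<in>P. ip I a x \<ge> b))"

definition is_face :: "'i set \<Rightarrow> ('i \<Rightarrow> real) set \<Rightarrow> ('i \<Rightarrow> real) set \<Rightarrow> bool" where
  "is_face I P F \<longleftrightarrow> (\<exists>H. finite H \<and> H \<noteq> {} \<and> (\<forall>(a, b)\<in>H. supporting I P a b) \<and>
      F = P \<inter> {x. \<forall>(a, b)\<in>H. ip I a x = b})"

definition affine_map :: "'i set \<Rightarrow> 'j set \<Rightarrow> (('i \<Rightarrow> real) \<Rightarrow> ('j \<Rightarrow> real)) \<Rightarrow> bool" where
  "affine_map I J \<alpha> \<longleftrightarrow> (\<exists>A c. \<forall>x. \<alpha> x = (\<lambda>k. if k \<in> J then c k + (\<Sum>p\<in>I. A k p * x p) else 0))"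

end

theory Submission
  imports Defs
begin

text \<open>Let \<open>C\<close> be the coordinates \<open>(i, n + j)\<close> with \<open>{i, j} \<in> E\<close>. The face of \<open>LOP(2n)\<close>
  cut out by \<open>y\<^sub>p = 1\<close> for \<open>p \<in> C\<close> is the convex hull of the linear orders placing every \<open>i\<close>
  before every \<open>n + j\<close> with \<open>{i, j} \<in> E\<close>, and the affine map sends \<open>y\<close> to \<open>(1 - y\<^bsub>(k, n+k)\<^esub>)\<^sub>k\<close>,
  i.e. vertex \<open>k\<close> is selected iff \<open>n + k\<close> precedes \<open>k\<close>. Such an order never selects both ends
  of an edge \<open>{i, j}\<close>, since \<open>n+i < i < n+j < j < n+i\<close> would be a cycle; conversely a stable
  set \<open>S\<close> is realised by ordering the blocks \<open>[n] - S\<close>, \<open>n + S\<close>, \<open>S\<close>, \<open>n + ([n] - S)\<close>.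
  Both the face and the stable set polytope are convex hulls, so it suffices to match vertices.\<close>

lemma convex_comb_in_conv:
  assumes "finite T" "T \<noteq> {}" "\<forall>w\<in>T. c w \<ge> (0::real)" "sum c T = 1" "\<forall>w\<in>T. f w \<in> S"
  shows "(\<lambda>k. \<Sum>w\<in>T. c w * f w k) \<in> conv S"
proof -
  define c' where "c' u = sum c {w\<in>T. f w = u}" for u
  have sum_c': "sum c' (f ` T) = 1"
    using sum.image_gen[OF assms(1), of c f] assms(4) by (simp add: c'_def)
  have "(\<Sum>w\<in>T. c w * f w k) = (\<Sum>u\<in>f ` T. c' u * u k)" for k
  proof -
    have "(\<Sum>w\<in>T. c w * f w k) = (\<Sum>u\<in>f ` T. \<Sum>w\<in>{w\<in>T. f w = u}. c w * f w k)"
      using sum.image_gen[OF assms(1), of "\<lambda>w. c w * f w k" f] .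
    also have "\<dots> = (\<Sum>u\<in>f ` T. c' u * u k)"
      unfolding c'_def sum_distrib_right by (intro sum.cong refl) auto
    finally show ?thesis .
  qed
  then show ?thesis
    unfolding conv_def using assms sum_c'
    by (intro CollectI exI[of _ "f ` T"] exI[of _ c']) (auto simp: c'_def intro!: sum_nonneg)
qed

lemma in_conv: "x \<in> S \<Longrightarrow> x \<in> conv S"
  using convex_comb_in_conv[of "{x}" "\<lambda>_. 1" id S] by simp

lemma conv_mono: "S \<subseteq> S' \<Longrightarrow> conv S \<subseteq> conv S'"
  unfolding conv_def by blast

lemma conv_obtain_pos:
  assumes "x \<in> conv S"
  obtains T c where "finite T" "T \<subseteq> S" "\<forall>v\<in>T. c v > 0" "sum c T = 1"
    "x = (\<lambda>k. \<Sum>v\<in>T. c v * v k)"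
proof -
  from assms obtain T c where T: "finite T" "T \<subseteq> S" "\<forall>v\<in>T. c v \<ge> 0" "sum c T = 1"
    "x = (\<lambda>k. \<Sum>v\<in>T. c v * v k)"
    unfolding conv_def by blast
  define T' where "T' = {v \<in> T. c v \<noteq> 0}"
  have T': "finite T'" "T' \<subseteq> T" using T(1) unfolding T'_def by auto
  have "sum c T' = sum c T"
    by (rule sum.mono_neutral_left[OF T(1) T'(2)]) (auto simp: T'_def)
  moreover have "(\<Sum>v\<in>T'. c v * v k) = (\<Sum>v\<in>T. c v * v k)" for k
    by (rule sum.mono_neutral_left[OF T(1) T'(2)]) (auto simp: T'_def)
  ultimately show ?thesis
    using T T' that[of T' c] unfolding T'_def by fastforce
qed

lemma conv_coord_le:
  assumes "x \<in> conv S" "\<forall>v\<in>S. v p \<le> b"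
  shows "x p \<le> b"
proof -
  obtain T c where T: "finite T" "T \<subseteq> S" "\<forall>v\<in>T. c v > 0" "sum c T = 1"
    "x = (\<lambda>k. \<Sum>v\<in>T. c v * v k)"
    using conv_obtain_pos[OF assms(1)] .
  have "(\<Sum>v\<in>T. c v * v p) \<le> (\<Sum>v\<in>T. c v * b)"
    using T(2,3) assms(2) by (intro sum_mono) (simp add: subset_iff less_imp_le)
  with T(4,5) show ?thesis by (simp add: sum_distrib_right[symmetric])
qed

text \<open>A convex combination attains the bound \<open>1\<close> in a coordinate only if every point
  carrying positive weight does.\<close>

lemma conv_coord_face_eq:
  assumes "\<forall>v\<in>V. \<forall>p\<in>C. v p \<le> 1"
  shows "conv V \<inter> {x. \<forall>p\<in>C. x p = 1} = conv {v\<in>V. \<forall>p\<in>C. v p = 1}"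
proof
  show "conv V \<inter> {x. \<forall>p\<in>C. x p = 1} \<subseteq> conv {v\<in>V. \<forall>p\<in>C. v p = 1}"
  proof clarify
    fix x assume x: "x \<in> conv V" "\<forall>p\<in>C. x p = 1"
    obtain T c where T: "finite T" "T \<subseteq> V" "\<forall>v\<in>T. c v > 0" "sum c T = 1"
      "x = (\<lambda>k. \<Sum>v\<in>T. c v * v k)"
      using conv_obtain_pos[OF x(1)] .
    have tight: "v p = 1" if "v \<in> T" "p \<in> C" for v p
    proof -
      have "(\<Sum>v\<in>T. c v * (1 - v p)) = sum c T - x p"
        using T(5) by (simp add: algebra_simps sum_subtractf)
      also have "\<dots> = 0" using T(4) x(2) \<open>p \<in> C\<close> by simp
      finally have "\<forall>v\<in>T. c v * (1 - v p) = 0"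
        using T(1-3) assms \<open>p \<in> C\<close>
        by (subst sum_nonneg_eq_0_iff[symmetric]) (auto simp: subset_iff less_imp_le)
      with that T(3) show ?thesis by fastforce
    qed
    have "T \<noteq> {}" using T(4) by auto
    with T tight show "x \<in> conv {v\<in>V. \<forall>p\<in>C. v p = 1}"
      unfolding conv_def by (intro CollectI exI[of _ T] exI[of _ c]) (auto simp: less_imp_le)
  qed
  show "conv {v\<in>V. \<forall>p\<in>C. v p = 1} \<subseteq> conv V \<inter> {x. \<forall>p\<in>C. x p = 1}"
  proof
    fix x assume x: "x \<in> conv {v\<in>V. \<forall>p\<in>C. v p = 1}"
    have "x p = 1" if "p \<in> C" for p
    proof -
      obtain T c where T: "finite T" "T \<subseteq> {v\<in>V. \<forall>p\<in>C. v p = 1}" "\<forall>v\<in>T. c v > 0"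
        "sum c T = 1" "x = (\<lambda>k. \<Sum>v\<in>T. c v * v k)"
        using conv_obtain_pos[OF x] .
      have "(\<Sum>v\<in>T. c v * v p) = sum c T"
        using T(2) \<open>p \<in> C\<close> by (intro sum.cong) auto
      with T(4,5) show "x p = 1" by simp
    qed
    with x conv_mono[of "{v\<in>V. \<forall>p\<in>C. v p = 1}" V]
    show "x \<in> conv V \<inter> {x. \<forall>p\<in>C. x p = 1}" by blast
  qed
qed

lemma conv_image:
  assumes affine: "\<And>T c. finite T \<Longrightarrow> sum c T = 1 \<Longrightarrow>
      f (\<lambda>k. \<Sum>v\<in>T. c v * v k) = (\<lambda>k. \<Sum>v\<in>T. c v * f v k)"
  shows "f ` conv S = conv (f ` S)"
proof
  show "f ` conv S \<subseteq> conv (f ` S)"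
  proof clarify
    fix x assume "x \<in> conv S"
    then obtain T c where T: "finite T" "T \<subseteq> S" "\<forall>v\<in>T. c v > 0" "sum c T = 1"
      "x = (\<lambda>k. \<Sum>v\<in>T. c v * v k)"
      by (rule conv_obtain_pos)
    have "T \<noteq> {}" using T(4) by auto
    with T show "f x \<in> conv (f ` S)"
      by (simp add: affine convex_comb_in_conv less_imp_le subset_iff)
  qed
  show "conv (f ` S) \<subseteq> f ` conv S"
  proof
    fix y assume "y \<in> conv (f ` S)"
    then obtain T c where T: "finite T" "T \<subseteq> f ` S" "\<forall>u\<in>T. c u > 0" "sum c T = 1"
      "y = (\<lambda>k. \<Sum>u\<in>T. c u * u k)"
      by (rule conv_obtain_pos)
    define g where "g = inv_into S f"
    have g: "g u \<in> S" "f (g u) = u" if "u \<in> T" for u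
    proof -
      have "u \<in> f ` S" using that T(2) by blast
      then show "g u \<in> S" "f (g u) = u" by (simp_all add: g_def inv_into_into f_inv_into_f)
    qed
    have inj: "inj_on g T" by (rule inj_on_inverseI[of T f]) (rule g(2))
    define x where "x = (\<lambda>k. \<Sum>w\<in>g ` T. c (f w) * w k)"
    have "sum (c \<circ> f) (g ` T) = 1"
      using T(4) g(2) by (simp add: sum.reindex[OF inj])
    moreover have "T \<noteq> {}" using T(4) by auto
    ultimately have "x \<in> conv S"
      unfolding x_def conv_def using T(1,3) g
      by (intro CollectI exI[of _ "g ` T"] exI[of _ "c \<circ> f"]) (auto simp: less_imp_le)
    moreover have "f x = y"
      using affine[OF _ \<open>sum (c \<circ> f) (g ` T) = 1\<close>] T(1,5) g(2)
      by (simp add: x_def sum.reindex[OF inj])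
    ultimately show "y \<in> f ` conv S" by blast
  qed
qed

lemma ip_unit:
  assumes "finite I" "p \<in> I"
  shows "ip I (\<lambda>q. if q = p then 1 else 0) x = x p"
  using assms unfolding ip_def by (simp add: if_distrib[of "\<lambda>t. t * _"] sum.delta' cong: if_cong)

lemma is_face_coord_eq_one:
  assumes "finite I" "C \<subseteq> I" "\<forall>v\<in>V. \<forall>p\<in>C. v p \<le> 1" "v\<^sub>0 \<in> V" "\<forall>p\<in>C. v\<^sub>0 p = 1"
  shows "is_face I (conv V) (conv V \<inter> {x. \<forall>p\<in>C. x p = 1})"
proof -
  \<comment> \<open>The trivial hyperplane \<open>0 = 0\<close> keeps \<open>H\<close> nonempty when \<open>C = {}\<close>.\<close>
  define H where "H = insert (\<lambda>_. 0::real, 0::real)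
    ((\<lambda>p. (\<lambda>q. if q = p then 1::real else 0, 1::real)) ` C)"
  have ip_H: "(\<forall>(a, b)\<in>H. ip I a x = b) \<longleftrightarrow> (\<forall>p\<in>C. x p = 1)" for x
    using assms(1,2) by (auto simp: H_def ip_def[of _ "\<lambda>_. 0"] ip_unit subset_iff)
  have v\<^sub>0: "v\<^sub>0 \<in> conv V" using assms(4) by (rule in_conv)
  have "supporting I (conv V) (\<lambda>q. if q = p then 1 else 0) 1" if "p \<in> C" for p
  proof -
    have "p \<in> I" using that assms(2) by blast
    then show ?thesis
      unfolding supporting_def ip_unit[OF assms(1) \<open>p \<in> I\<close>]
      using v\<^sub>0 assms(3,5) that conv_coord_le[of _ V p 1] by auto
  qed
  moreover have "supporting I (conv V) (\<lambda>_. 0) 0"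
    using v\<^sub>0 unfolding supporting_def ip_def by auto
  ultimately have "supporting I (conv V) a b" if "(a, b) \<in> H" for a b
    using that unfolding H_def by blast
  moreover have "finite H"
    unfolding H_def using finite_subset[OF assms(2,1)] by simp
  ultimately show ?thesis
    unfolding is_face_def using ip_H by (intro exI[of _ H]) (auto simp: H_def)
qed

definition lop_vertices :: "nat \<Rightarrow> (nat \<times> nat \<Rightarrow> real) set" where
  "lop_vertices m = {char_vec m L | L. is_linear_order m L}"

definition stab_points :: "nat \<Rightarrow> nat set set \<Rightarrow> (nat \<Rightarrow> real) set" where
  "stab_points n E = {x. (\<forall>k\<in>{1..n}. x k \<in> {0, 1}) \<and> (\<forall>k. k \<notin> {1..n} \<longrightarrow> x k = 0) \<and>
                      (\<forall>i j. {i, j} \<in> E \<longrightarrow> x i + x j \<le> 1)}"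

definition edge_coords :: "nat \<Rightarrow> nat set set \<Rightarrow> (nat \<times> nat) set" where
  "edge_coords n E = {p \<in> lop_idx (2 * n). \<exists>i j. p = (i, n + j) \<and> {i, j} \<in> E}"

definition lop_to_stab :: "nat \<Rightarrow> (nat \<times> nat \<Rightarrow> real) \<Rightarrow> nat \<Rightarrow> real" where
  "lop_to_stab n x = (\<lambda>k. if k \<in> {1..n} then 1 - x (k, n + k) else 0)"

lemma finite_lop_idx: "finite (lop_idx m)"
  by (rule finite_subset[of _ "{1..m} \<times> {1..m}"]) (auto simp: lop_idx_def)

lemma affine_map_lop_to_stab: "affine_map (lop_idx (2 * n)) {1..n} (lop_to_stab n)"
  unfolding affine_map_def
proof (intro exI allI ext)
  fix x :: "nat \<times> nat \<Rightarrow> real" and k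
  have "k \<in> {1..n} \<Longrightarrow> (k, n + k) \<in> lop_idx (2 * n)" by (auto simp: lop_idx_def)
  then show "lop_to_stab n x k = (if k \<in> {1..n} then 1 +
      (\<Sum>p\<in>lop_idx (2 * n). (if p = (k, n + k) then -1 else 0) * x p) else 0)"
    using finite_lop_idx
    by (simp add: lop_to_stab_def if_distrib[of "\<lambda>t. t * _"] sum.delta' cong: if_cong)
qed

lemma lop_to_stab_convex_comb:
  assumes "sum c T = 1"
  shows "lop_to_stab n (\<lambda>k. \<Sum>v\<in>T. c v * v k) = (\<lambda>k. \<Sum>v\<in>T. c v * lop_to_stab n v k)"
proof
  fix k
  show "lop_to_stab n (\<lambda>k. \<Sum>v\<in>T. c v * v k) k = (\<Sum>v\<in>T. c v * lop_to_stab n v k)"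
  proof (cases "k \<in> {1..n}")
    case True
    with assms show ?thesis by (simp add: lop_to_stab_def right_diff_distrib sum_subtractf)
  next
    case False
    show ?thesis unfolding lop_to_stab_def if_not_P[OF False] by simp
  qed
qed

lemma edge_coordsD:
  assumes "simple_graph n E" "{i, j} \<in> E"
  shows "i \<in> {1..n}" "j \<in> {1..n}" "i \<noteq> j" "(i, n + j) \<in> edge_coords n E"
proof -
  show ij: "i \<in> {1..n}" "j \<in> {1..n}" "i \<noteq> j"
    using assms unfolding simple_graph_def by fastforce+
  then show "(i, n + j) \<in> edge_coords n E"
    using assms(2) unfolding edge_coords_def lop_idx_def by auto
qed

lemma is_linear_orderD:
  assumes "is_linear_order m L"
  shows "\<And>i j. i \<in> {1..m} \<Longrightarrow> j \<in> {1..m} \<Longrightarrow> i \<noteq> j \<Longrightarrow> (i, j) \<notin> L \<Longrightarrow> (j, i) \<in> L"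
    and "\<And>i j k. (i, j) \<in> L \<Longrightarrow> (j, k) \<in> L \<Longrightarrow> (i, k) \<in> L"
    and "(i, i) \<notin> L"
  using assms unfolding is_linear_order_def by blast+

lemma lop_to_stab_face_vertex:
  assumes "simple_graph n E" "is_linear_order (2 * n) L"
    and face: "\<forall>p\<in>edge_coords n E. char_vec (2 * n) L p = 1"
  shows "lop_to_stab n (char_vec (2 * n) L) \<in> stab_points n E"
proof -
  define y where "y = lop_to_stab n (char_vec (2 * n) L)"
  have y01: "y k = 0 \<or> y k = 1" for k
    unfolding y_def lop_to_stab_def char_vec_def by simp
  have selected: "(n + k, k) \<in> L" if "k \<in> {1..n}" "y k = 1" for k
  proof -
    have "(k, n + k) \<in> lop_idx (2 * n)" using that(1) by (auto simp: lop_idx_def)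
    with that have "(k, n + k) \<notin> L"
      by (auto simp: y_def lop_to_stab_def char_vec_def split: if_splits)
    moreover have "k \<in> {1..2 * n}" "n + k \<in> {1..2 * n}" "k \<noteq> n + k" using that(1) by auto
    ultimately show ?thesis using is_linear_orderD(1)[OF assms(2)] by blast
  qed
  have "y i + y j \<le> 1" if e: "{i, j} \<in> E" for i j
  proof (rule ccontr)
    assume "\<not> y i + y j \<le> 1"
    then have "y i = 1" "y j = 1" using y01[of i] y01[of j] by auto
    then have "(n + i, i) \<in> L" "(n + j, j) \<in> L"
      using selected edge_coordsD(1,2)[OF assms(1) e] by blast+
    moreover have "{j, i} \<in> E" using e by (simp add: insert_commute)
    then have "(i, n + j) \<in> L" "(j, n + i) \<in> L"
      using face edge_coordsD(4)[OF assms(1) e] edge_coordsD(4)[OF assms(1) \<open>{j, i} \<in> E\<close>]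
      unfolding char_vec_def by (auto split: if_splits)
    ultimately have "(n + i, n + i) \<in> L" using is_linear_orderD(2)[OF assms(2)] by blast
    then show False using is_linear_orderD(3)[OF assms(2)] by blast
  qed
  moreover have "y k = 0" if "k \<notin> {1..n}" for k
    unfolding y_def lop_to_stab_def if_not_P[OF that] ..
  ultimately show ?thesis
    unfolding y_def[symmetric] stab_points_def using y01 by blast
qed

definition stab_rank :: "nat \<Rightarrow> (nat \<Rightarrow> real) \<Rightarrow> nat \<Rightarrow> nat" where
  "stab_rank n v i =
     (if i \<le> n then (if v i = 1 then 2 else 0) else (if v (i - n) = 1 then 1 else 3))"

definition stab_order :: "nat \<Rightarrow> (nat \<Rightarrow> real) \<Rightarrow> (nat \<times> nat) set" where
  "stab_order n v = {(i, j). i \<in> {1..2*n} \<and> j \<in> {1..2*n} \<and>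
      (stab_rank n v i < stab_rank n v j \<or> (stab_rank n v i = stab_rank n v j \<and> i < j))}"

lemma is_linear_order_stab_order: "is_linear_order (2 * n) (stab_order n v)"
  unfolding is_linear_order_def stab_order_def by auto

lemma char_vec_stab_order_edge_coords:
  assumes "simple_graph n E" "v \<in> stab_points n E" "p \<in> edge_coords n E"
  shows "char_vec (2 * n) (stab_order n v) p = 1"
proof -
  obtain i j where p: "p = (i, n + j)" "{i, j} \<in> E" "p \<in> lop_idx (2 * n)"
    using assms(3) unfolding edge_coords_def by blast
  have "i \<in> {1..n}" "j \<in> {1..n}" using edge_coordsD[OF assms(1) p(2)] by auto
  moreover have "v i \<in> {0, 1}" "v j \<in> {0, 1}" "v i + v j \<le> 1"
    using assms(2) p(2) calculation unfolding stab_points_def by auto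
  ultimately have "(i, n + j) \<in> stab_order n v"
    unfolding stab_order_def stab_rank_def by auto
  with p show ?thesis unfolding char_vec_def by auto
qed

lemma lop_to_stab_char_vec_stab_order:
  assumes "v \<in> stab_points n E"
  shows "lop_to_stab n (char_vec (2 * n) (stab_order n v)) = v"
proof
  fix k
  show "lop_to_stab n (char_vec (2 * n) (stab_order n v)) k = v k"
  proof (cases "k \<in> {1..n}")
    case True
    then have "(k, n + k) \<in> lop_idx (2 * n)" "v k \<in> {0, 1}"
      using assms by (auto simp: lop_idx_def stab_points_def)
    with True show ?thesis
      unfolding lop_to_stab_def char_vec_def stab_order_def stab_rank_def by auto
  next
    case False
    with assms show ?thesis unfolding lop_to_stab_def stab_points_def by auto
  qed
qed

lemma lop_to_stab_face_vertices:
  assumes "simple_graph n E"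
  shows "lop_to_stab n ` {w \<in> lop_vertices (2 * n). \<forall>p\<in>edge_coords n E. w p = 1} =
    stab_points n E"
proof
  show "lop_to_stab n ` {w \<in> lop_vertices (2 * n). \<forall>p\<in>edge_coords n E. w p = 1}
      \<subseteq> stab_points n E"
    using lop_to_stab_face_vertex[OF assms] unfolding lop_vertices_def by blast
  show "stab_points n E
      \<subseteq> lop_to_stab n ` {w \<in> lop_vertices (2 * n). \<forall>p\<in>edge_coords n E. w p = 1}"
  proof
    fix v assume "v \<in> stab_points n E"
    then show "v \<in> lop_to_stab n ` {w \<in> lop_vertices (2 * n). \<forall>p\<in>edge_coords n E. w p = 1}"
      using lop_to_stab_char_vec_stab_order is_linear_order_stab_order
        char_vec_stab_order_edge_coords[OF assms]
      unfolding lop_vertices_def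
      by (intro image_eqI[of _ _ "char_vec (2 * n) (stab_order n v)"]) auto
  qed
qed

theorem lemma1:
  fixes n :: nat and E :: "nat set set"
  assumes "simple_graph n E"
  shows "\<exists>F \<alpha>. is_face (lop_idx (2 * n)) (LOP (2 * n)) F \<and>
              affine_map (lop_idx (2 * n)) {1..n} \<alpha> \<and> \<alpha> ` F = STAB n E"
proof -
  let ?V = "lop_vertices (2 * n)" and ?C = "edge_coords n E"
  let ?F = "LOP (2 * n) \<inter> {x. \<forall>p\<in>?C. x p = 1}"
  have LOP_eq: "LOP (2 * n) = conv ?V" unfolding LOP_def lop_vertices_def ..
  have STAB_eq: "STAB n E = conv (stab_points n E)" unfolding STAB_def stab_points_def ..
  have V_le_1: "\<forall>v\<in>?V. \<forall>p\<in>?C. v p \<le> 1"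
    unfolding lop_vertices_def char_vec_def by auto
  define v\<^sub>0 where "v\<^sub>0 = char_vec (2 * n) (stab_order n (\<lambda>_. 0))"
  have "(\<lambda>_. 0) \<in> stab_points n E" unfolding stab_points_def by auto
  then have "v\<^sub>0 \<in> ?V" "\<forall>p\<in>?C. v\<^sub>0 p = 1"
    unfolding v\<^sub>0_def lop_vertices_def
    using is_linear_order_stab_order char_vec_stab_order_edge_coords[OF assms] by auto
  then have "is_face (lop_idx (2 * n)) (LOP (2 * n)) ?F"
    unfolding LOP_eq using finite_lop_idx V_le_1
    by (intro is_face_coord_eq_one) (auto simp: edge_coords_def)
  moreover have "lop_to_stab n ` ?F = STAB n E"
    unfolding LOP_eq conv_coord_face_eq[OF V_le_1]
    by (simp add: conv_image lop_to_stab_convex_comb lop_to_stab_face_vertices[OF assms] STAB_eq)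
  ultimately show ?thesis using affine_map_lop_to_stab by blast
qed

end
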